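(* Let $L\in\mathbb{N}$, $\alpha,T,\hat r>0$, $\varphi_i\in\mathbb{R}$, and let $R_1,\dots,R_L$ be i.i.d. random variables with PDF $$f(r)=\alpha\exp\Big(-\frac{r^\alpha}{\hat r^\alpha}\Big)\sum_{i=0}^\infty\frac{\varphi_i\,r^{\alpha(i+T)-1}}{\hat r^{\alpha(i+T)}\Gamma(i+T)},\qquad r\ge0.$$ Let $R=\sum_{\ell=1}^LR_\ell$, $\lambda_i=\frac{\Gamma(\alpha(i+T))}{\hat r^{\alpha i}}\sum_{j=0}^i\frac{(-1)^{i-j}\varphi_j}{(i-j)!\,\Gamma(j+T)}$ for $i\ge0$, $\delta_0=\lambda_0^L$ and $\delta_i=\frac{1}{i\lambda_0}\sum_{h=1}^i\delta_{i-h}\lambda_h(hL+h-i)$ for $i\ge1$. Then for $r\ge0$ $$f_R(r)=\frac{\alpha^L}{\hat r^{\alpha TL}}\sum_{i=0}^\infty\frac{\delta_i\,r^{-1+\alpha i+\alpha LT}}{\Gamma(i\alpha+\alpha LT)},\qquad F_R(r)=\frac{\alpha^L}{\hat r^{\alpha TL}}\sum_{i=0}^\infty\frac{\delta_i\,r^{\alpha i+\alpha LT}}{\Gamma(1+i\alpha+\alpha LT)}.$$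
   Context: $\Gamma$ is the gamma function. The given $f$ is assumed to be a valid (absolutely convergent) probability density. *)

theory Defs
  imports "HOL-Probability.Probability"
begin

definition pdf_f :: "real \<Rightarrow> real \<Rightarrow> real \<Rightarrow> (nat \<Rightarrow> real) \<Rightarrow> real \<Rightarrow> real" where
  "pdf_f \<alpha> T rh \<phi> r =
     \<alpha> * exp (- (r powr \<alpha>) / (rh powr \<alpha>)) *
     (\<Sum>i. \<phi> i * r powr (\<alpha> * (real i + T) - 1) / (rh powr (\<alpha> * (real i + T)) * Gamma (real i + T)))"

definition lam :: "real \<Rightarrow> real \<Rightarrow> real \<Rightarrow> (nat \<Rightarrow> real) \<Rightarrow> nat \<Rightarrow> real" where
  "lam \<alpha> T rh \<phi> i =
     Gamma (\<alpha> * (real i + T)) / rh powr (\<alpha> * real i) *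
     (\<Sum>j\<le>i. (-1) ^ (i - j) * \<phi> j / (fact (i - j) * Gamma (real j + T)))"

function delta :: "real \<Rightarrow> real \<Rightarrow> real \<Rightarrow> (nat \<Rightarrow> real) \<Rightarrow> nat \<Rightarrow> nat \<Rightarrow> real" where
  "delta \<alpha> T rh \<phi> L i =
     (if i = 0 then (lam \<alpha> T rh \<phi> 0) ^ L
      else (1 / (real i * lam \<alpha> T rh \<phi> 0)) *
        (\<Sum>h\<in>{1..i}. delta \<alpha> T rh \<phi> L (i - h) * lam \<alpha> T rh \<phi> h *
            (real (h * L + h) - real i)))"
  by pat_completeness auto
termination
  by (relation "Wellfounded.measure (\<lambda>(_, _, _, _, _, i). i)") auto

definition pdf_sum :: "real \<Rightarrow> real \<Rightarrow> real \<Rightarrow> (nat \<Rightarrow> real) \<Rightarrow> nat \<Rightarrow> real \<Rightarrow> real" where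
  "pdf_sum \<alpha> T rh \<phi> L r =
     \<alpha> ^ L / rh powr (\<alpha> * T * real L) *
     (\<Sum>i. delta \<alpha> T rh \<phi> L i * r powr (-1 + \<alpha> * real i + \<alpha> * real L * T)
            / Gamma (real i * \<alpha> + \<alpha> * real L * T))"

definition cdf_sum :: "real \<Rightarrow> real \<Rightarrow> real \<Rightarrow> (nat \<Rightarrow> real) \<Rightarrow> nat \<Rightarrow> real \<Rightarrow> real" where
  "cdf_sum \<alpha> T rh \<phi> L r =
     \<alpha> ^ L / rh powr (\<alpha> * T * real L) *
     (\<Sum>i. delta \<alpha> T rh \<phi> L i * r powr (\<alpha> * real i + \<alpha> * real L * T)
            / Gamma (1 + real i * \<alpha> + \<alpha> * real L * T))"

end

theory Submission
  imports Defs "HOL-Computational_Algebra.Formal_Power_Series"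
begin

(* Every density involved is a Mittag-Leffler type series
     S_a(c)(r) = sum_i c_i r^(alpha i + a - 1) / Gamma(alpha i + a)          (ml_series alpha c a r).
   Multiplying the exponential factor of f into its series (a Cauchy product) shows f = S_(alpha T)(c)
   with c_i = alpha lambda_i / rh^(alpha T).  Integrating term by term against the Beta integral, the
   convolution of S_a(c) and S_b(d) is S_(a+b) of the Cauchy product of c and d, i.e. of the coefficients
   of the product of their generating power series.  Hence R has density S_(alpha T L) of the
   coefficients of (sum_i c_i x^i)^L, and J.C.P. Miller's recurrence for the coefficients of a power of a
   power series identifies these with (alpha / rh^(alpha T))^L delta_i.  Integrating S_a(c) over [0, r]
   is one more Beta integral and gives S_(a+1)(c)(r), the distribution function. *)

lemma has_integral_powr_Beta:
  fixes p q r :: real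
  assumes p: "p > 0" and q: "q > 0" and r: "r > 0"
  shows "((\<lambda>s. (r - s) powr (p - 1) * s powr (q - 1)) has_integral r powr (p + q - 1) * Beta q p) {0..r}"
proof -
  have "((\<lambda>x. (\<lambda>t. t powr (q - 1) * (1 - t) powr (p - 1)) ((1/r) * x))
          has_integral (1 / \<bar>1/r\<bar>) *\<^sub>R Beta q p) ((\<lambda>x. x / (1/r)) ` {0..1})"
    by (rule has_integral_stretch_real[OF has_integral_Beta_real[OF q p]]) (use r in simp)
  moreover have "(\<lambda>x. x / (1/r)) ` {0..1} = {0..r}"
    using r by (auto simp: image_iff intro!: bexI[where x="_ / r"] simp: field_simps)
  ultimately have "((\<lambda>s. (s/r) powr (q - 1) * (1 - s/r) powr (p - 1)) has_integral r * Beta q p) {0..r}"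
    using r by simp
  from has_integral_mult_right[OF this, of "r powr (p + q - 2)"]
  have "((\<lambda>s. r powr (p + q - 2) * ((s/r) powr (q - 1) * (1 - s/r) powr (p - 1)))
          has_integral r powr (p + q - 2) * (r * Beta q p)) {0..r}" .
  moreover have "r powr (p + q - 2) * ((s/r) powr (q - 1) * (1 - s/r) powr (p - 1)) =
      (r - s) powr (p - 1) * s powr (q - 1)" if "s \<in> {0..r}" for s
  proof -
    have "1 - s/r = (r - s) / r" using r by (simp add: field_simps)
    then have "(s/r) powr (q - 1) * (1 - s/r) powr (p - 1) =
        s powr (q - 1) * (r - s) powr (p - 1) / (r powr (q - 1) * r powr (p - 1))"
      using that r by (simp add: powr_divide)
    also have "r powr (q - 1) * r powr (p - 1) = r powr (p + q - 2)"
      by (simp add: powr_add[symmetric] add.commute)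
    finally show ?thesis using r by (simp add: field_simps)
  qed
  moreover have "r powr (p + q - 2) * (r * Beta q p) = r powr (p + q - 1) * Beta q p"
    using r by (simp add: powr_add[symmetric] powr_diff power2_eq_square)
  ultimately show ?thesis
    by (metis (no_types, lifting) has_integral_cong)
qed

lemma Gamma_real_neq_0: "x > 0 \<Longrightarrow> Gamma x \<noteq> (0::real)"
  using Gamma_real_pos by (metis less_irrefl)

lemma has_integral_powr_Gamma:
  fixes p q r :: real
  assumes "p > 0" "q > 0" "r > 0"
  shows "((\<lambda>s. (r - s) powr (p - 1) * (s powr (q - 1) / Gamma q)) has_integral
           Gamma p * (r powr (q + p - 1) / Gamma (q + p))) {0..r}"
proof -
  have "Gamma q \<noteq> 0" "Gamma (q + p) \<noteq> 0"
    using assms by (simp_all add: Gamma_real_neq_0)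
  then have "r powr (p + q - 1) * Beta q p / Gamma q = Gamma p * (r powr (q + p - 1) / Gamma (q + p))"
    unfolding Beta_altdef rGamma_inverse_Gamma by (simp add: field_simps add.commute)
  then show ?thesis
    using has_integral_divide[OF has_integral_powr_Beta[OF assms], of "Gamma q"] by simp
qed

lemma integral_sums_dominated:
  fixes f :: "nat \<Rightarrow> real \<Rightarrow> real"
  assumes f: "\<And>i. (f i has_integral v i) S"
    and h: "h integrable_on S"
    and bound: "\<And>k x. x \<in> S \<Longrightarrow> \<bar>\<Sum>i<k. f i x\<bar> \<le> h x"
    and lim: "\<And>x. x \<in> S \<Longrightarrow> (\<lambda>k. \<Sum>i<k. f i x) \<longlonglongrightarrow> g x"
  shows "g integrable_on S" and "v sums integral S g"
proof -
  have F: "((\<lambda>x. \<Sum>i<k. f i x) has_integral (\<Sum>i<k. v i)) S" for k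
    using f by (intro has_integral_sum) auto
  note DC = dominated_convergence[OF has_integral_integrable[OF F] h _ lim]
  show "g integrable_on S" using DC(1) bound by simp
  have "(\<lambda>k. integral S (\<lambda>x. \<Sum>i<k. f i x)) \<longlonglongrightarrow> integral S g" using DC(2) bound by simp
  then show "v sums integral S g"
    unfolding sums_def integral_unique[OF F] .
qed

lemma sums_antidiagonals:
  fixes u :: "nat \<Rightarrow> nat \<Rightarrow> real"
  assumes rows: "\<And>i. summable (\<lambda>j. \<bar>u i j\<bar>)" and cols: "summable (\<lambda>i. \<Sum>j. \<bar>u i j\<bar>)"
  shows "(\<lambda>n. \<Sum>i\<le>n. u i (n - i)) sums (\<Sum>i. \<Sum>j. u i j)"
proof -
  define U where "U = (\<lambda>(i, j). u i j)"
  have row_abs: "((\<lambda>j. norm (U (i, j))) has_sum (\<Sum>j. \<bar>u i j\<bar>)) UNIV" for i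
    using sums_nonneg_imp_has_sum[OF summable_sums[OF rows]] by (simp add: U_def)
  have row: "((\<lambda>j. U (i, j)) has_sum (\<Sum>j. u i j)) UNIV" for i
    using norm_summable_imp_has_sum[OF _ summable_sums[OF summable_rabs_cancel[OF rows]]] rows
    by (simp add: U_def)
  have col_abs: "(\<lambda>i. norm (infsum (\<lambda>j. norm (U (i, j))) UNIV)) summable_on UNIV"
    unfolding infsumI[OF row_abs] using sums_nonneg_imp_has_sum[OF summable_sums[OF cols]]
    by (auto simp: summable_on_def suminf_nonneg[OF rows])
  have "(\<lambda>x. norm (U x)) summable_on UNIV \<times> UNIV"
  proof (rule Infinite_Sum.abs_summable_on_Sigma_iff[THEN iffD2], intro conjI ballI)
    show "(\<lambda>j. norm (U (i, j))) summable_on UNIV" for i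
      using row_abs[of i] by (rule has_sum_imp_summable)
  qed (fact col_abs)
  then have U: "(U has_sum infsum U (UNIV \<times> UNIV)) (UNIV \<times> UNIV)"
    by (rule has_sum_infsum[OF abs_summable_summable])
  have "((\<lambda>i. \<Sum>j. u i j) has_sum infsum U (UNIV \<times> UNIV)) UNIV"
    using has_sum_Sigma'[OF U row] .
  then have by_rows: "infsum U (UNIV \<times> UNIV) = (\<Sum>i. \<Sum>j. u i j)"
    by (intro sums_unique has_sum_imp_sums)
  have "((\<lambda>(n, i). u i (n - i)) has_sum infsum U (UNIV \<times> UNIV)) (SIGMA n:UNIV. {..n})"
    by (rule has_sum_reindex_bij_witness[where i = "\<lambda>(i, j). (i + j, i)" and j = "\<lambda>(n, i). (i, n - i)",
          THEN iffD2, OF _ _ _ _ _ refl U])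
       (auto simp: U_def)
  then have "((\<lambda>n. \<Sum>i\<le>n. u i (n - i)) has_sum infsum U (UNIV \<times> UNIV)) UNIV"
    by (rule has_sum_Sigma') simp
  then show ?thesis
    unfolding by_rows by (rule has_sum_imp_sums)
qed

lemma fps_power_nth_recurrence:
  fixes A :: "'a :: comm_ring_1 fps"
  shows "fps_nth A 0 * of_nat n * fps_nth (A ^ L) n =
         (\<Sum>h = 1..n. fps_nth (A ^ L) (n - h) * fps_nth A h * (of_nat (h * L + h) - of_nat n))"
proof -
  define B where "B = A ^ L"
  have "A * fps_XD B = fps_const (of_nat L) * (fps_XD A * B)"
    unfolding B_def fps_XD_def comp_def fps_deriv_power by (cases L) (simp_all add: mult_ac)
  then have "fps_nth (A * fps_XD B) n = of_nat L * fps_nth (fps_XD A * B) n"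
    by simp
  then have "(\<Sum>h = 0..n. fps_nth A h * fps_nth (fps_XD B) (n - h)) =
             of_nat L * (\<Sum>h = 0..n. fps_nth (fps_XD A) h * fps_nth B (n - h))"
    by (simp only: fps_mult_nth)
  then have "(\<Sum>h = 0..n. fps_nth A h * (of_nat (n - h) * fps_nth B (n - h))) =
             of_nat L * (\<Sum>h = 0..n. of_nat h * fps_nth A h * fps_nth B (n - h))"
    by (simp only: fps_XD_nth)
  then have "fps_nth A 0 * of_nat n * fps_nth B n + (\<Sum>h = 1..n. fps_nth A h * (of_nat (n - h) * fps_nth B (n - h))) =
             of_nat L * (\<Sum>h = 1..n. of_nat h * fps_nth A h * fps_nth B (n - h))"
    by (simp add: sum.atLeast_Suc_atMost mult_ac)
  then have "fps_nth A 0 * of_nat n * fps_nth B n =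
      (\<Sum>h = 1..n. of_nat L * (of_nat h * fps_nth A h * fps_nth B (n - h)) - fps_nth A h * (of_nat (n - h) * fps_nth B (n - h)))"
    by (simp add: eq_diff_eq sum_subtractf sum_distrib_left)
  also have "\<dots> = (\<Sum>h = 1..n. fps_nth B (n - h) * fps_nth A h * (of_nat (h * L + h) - of_nat n))"
    by (intro sum.cong refl) (auto simp: of_nat_diff algebra_simps)
  finally show ?thesis
    unfolding B_def .
qed

definition ml_series :: "real \<Rightarrow> (nat \<Rightarrow> real) \<Rightarrow> real \<Rightarrow> real \<Rightarrow> real" where
  "ml_series \<alpha> c a r = (\<Sum>i. c i * r powr (\<alpha> * real i + a - 1) / Gamma (\<alpha> * real i + a))"

definition ml_majorant :: "real \<Rightarrow> (nat \<Rightarrow> real) \<Rightarrow> real \<Rightarrow> real \<Rightarrow> real" where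
  "ml_majorant \<alpha> c a r = (\<Sum>i. \<bar>c i\<bar> * r powr (\<alpha> * real i) / Gamma (\<alpha> * real i + a))"

definition ml_summable :: "real \<Rightarrow> (nat \<Rightarrow> real) \<Rightarrow> real \<Rightarrow> bool" where
  "ml_summable \<alpha> c a \<longleftrightarrow>
     (\<forall>r>0. summable (\<lambda>i. \<bar>c i\<bar> * r powr (\<alpha> * real i) / Gamma (\<alpha> * real i + a)))"

lemma ml_series_at_0 [simp]: "ml_series \<alpha> c a 0 = 0"
  by (simp add: ml_series_def)

lemma Gamma_affine_pos: "\<alpha> \<ge> 0 \<Longrightarrow> a > 0 \<Longrightarrow> Gamma (\<alpha> * real i + a) > 0"
  by (intro Gamma_real_pos) (simp add: add_nonneg_pos)

lemma ml_summable_abs_iff [simp]: "ml_summable \<alpha> (\<lambda>i. \<bar>c i\<bar>) a \<longleftrightarrow> ml_summable \<alpha> c a"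
  by (simp add: ml_summable_def)

lemma ml_summable_cmult_iff:
  assumes "C \<noteq> 0"
  shows "ml_summable \<alpha> (\<lambda>i. C * c i) a \<longleftrightarrow> ml_summable \<alpha> c a"
proof -
  have "summable (\<lambda>i. \<bar>C * c i\<bar> * r powr (\<alpha> * real i) / Gamma (\<alpha> * real i + a)) \<longleftrightarrow>
        summable (\<lambda>i. \<bar>c i\<bar> * r powr (\<alpha> * real i) / Gamma (\<alpha> * real i + a))" for r
    using assms summable_cmult_iff[of "\<bar>C\<bar>" "\<lambda>i. \<bar>c i\<bar> * r powr (\<alpha> * real i) / Gamma (\<alpha> * real i + a)"]
    by (simp add: abs_mult mult.assoc)
  then show ?thesis
    by (simp add: ml_summable_def)
qed

lemma ml_majorant_nonneg:
  assumes "ml_summable \<alpha> c a" "\<alpha> \<ge> 0" "a > 0" "r > 0"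
  shows "ml_majorant \<alpha> c a r \<ge> 0"
  unfolding ml_majorant_def
  using assms Gamma_affine_pos[of \<alpha> a]
  by (intro suminf_nonneg) (auto simp: ml_summable_def intro!: divide_nonneg_pos)

lemma summable_abs_ml_terms:
  assumes "ml_summable \<alpha> c a" "\<alpha> \<ge> 0" "a > 0" "r > 0"
  shows "summable (\<lambda>i. \<bar>c i * r powr (\<alpha> * real i + a - 1) / Gamma (\<alpha> * real i + a)\<bar>)"
proof -
  have "summable (\<lambda>i. \<bar>c i\<bar> * r powr (\<alpha> * real i) / Gamma (\<alpha> * real i + a) * r powr (a - 1))"
    using assms unfolding ml_summable_def by (intro summable_mult2) auto
  moreover have "\<bar>c i * r powr (\<alpha> * real i + a - 1) / Gamma (\<alpha> * real i + a)\<bar> =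
      \<bar>c i\<bar> * r powr (\<alpha> * real i) / Gamma (\<alpha> * real i + a) * r powr (a - 1)" for i
    using assms Gamma_affine_pos[of \<alpha> a i]
    by (simp add: abs_mult powr_add[symmetric] abs_divide add_diff_eq)
  ultimately show ?thesis by simp
qed

lemma summable_ml_terms:
  assumes "ml_summable \<alpha> c a" "\<alpha> \<ge> 0" "a > 0" "r > 0"
  shows "summable (\<lambda>i. c i * r powr (\<alpha> * real i + a - 1) / Gamma (\<alpha> * real i + a))"
  using summable_abs_ml_terms[OF assms] by (rule summable_rabs_cancel)

lemma ml_series_cmult:
  assumes "ml_summable \<alpha> c a" "\<alpha> \<ge> 0" "a > 0" "r \<ge> 0"
  shows "ml_series \<alpha> (\<lambda>i. C * c i) a r = C * ml_series \<alpha> c a r"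
proof (cases "r = 0")
  case False
  then show ?thesis
    using suminf_mult[OF summable_ml_terms[OF assms(1-3)], of r C] assms(4)
    by (simp add: ml_series_def mult.assoc)
qed simp

lemma ml_partial_sums_bound:
  assumes "ml_summable \<alpha> c a" "\<alpha> \<ge> 0" "a > 0" "0 \<le> s" "s \<le> r" "r > 0"
  shows "\<bar>\<Sum>i<k. c i * s powr (\<alpha> * real i + a - 1) / Gamma (\<alpha> * real i + a)\<bar>
           \<le> ml_majorant \<alpha> c a r * s powr (a - 1)"
proof -
  have "\<bar>\<Sum>i<k. c i * s powr (\<alpha> * real i + a - 1) / Gamma (\<alpha> * real i + a)\<bar>
        \<le> (\<Sum>i<k. \<bar>c i * s powr (\<alpha> * real i + a - 1) / Gamma (\<alpha> * real i + a)\<bar>)"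
    by (rule sum_abs)
  also have "\<dots> \<le> (\<Sum>i<k. \<bar>c i\<bar> * r powr (\<alpha> * real i) / Gamma (\<alpha> * real i + a)) * s powr (a - 1)"
    unfolding sum_distrib_right
  proof (intro sum_mono)
    fix i
    have G: "Gamma (\<alpha> * real i + a) > 0" using Gamma_affine_pos assms by blast
    have "s powr (\<alpha> * real i + a - 1) = s powr (\<alpha> * real i) * s powr (a - 1)"
      by (simp add: powr_add[symmetric] add_diff_eq)
    also have "\<dots> \<le> r powr (\<alpha> * real i) * s powr (a - 1)"
      using assms by (intro mult_right_mono powr_mono2) auto
    finally have "\<bar>c i\<bar> * s powr (\<alpha> * real i + a - 1) / Gamma (\<alpha> * real i + a) \<le>
        \<bar>c i\<bar> * (r powr (\<alpha> * real i) * s powr (a - 1)) / Gamma (\<alpha> * real i + a)"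
      using G by (intro divide_right_mono mult_left_mono) auto
    then show "\<bar>c i * s powr (\<alpha> * real i + a - 1) / Gamma (\<alpha> * real i + a)\<bar> \<le>
        \<bar>c i\<bar> * r powr (\<alpha> * real i) / Gamma (\<alpha> * real i + a) * s powr (a - 1)"
      using G by (simp add: abs_mult mult_ac)
  qed
  also have "\<dots> \<le> ml_majorant \<alpha> c a r * s powr (a - 1)"
    unfolding ml_majorant_def using assms Gamma_affine_pos[of \<alpha> a]
    by (intro mult_right_mono sum_le_suminf) (auto simp: ml_summable_def intro!: divide_nonneg_pos)
  finally show ?thesis .
qed

lemma ml_partial_sums_LIMSEQ:
  assumes "ml_summable \<alpha> c a" "\<alpha> \<ge> 0" "a > 0" "s \<ge> 0"
  shows "(\<lambda>k. \<Sum>i<k. c i * s powr (\<alpha> * real i + a - 1) / Gamma (\<alpha> * real i + a)) \<longlonglongrightarrow> ml_series \<alpha> c a s"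
proof (cases "s = 0")
  case False
  then show ?thesis
    using summable_ml_terms[OF assms(1-3), of s] assms(4) unfolding ml_series_def
    by (intro summable_LIMSEQ) simp
qed simp

lemma ml_series_bound:
  assumes "ml_summable \<alpha> c a" "\<alpha> \<ge> 0" "a > 0" "0 \<le> s" "s \<le> r" "r > 0"
  shows "\<bar>ml_series \<alpha> c a s\<bar> \<le> ml_majorant \<alpha> c a r * s powr (a - 1)"
  using ml_partial_sums_bound[OF assms]
  by (intro LIMSEQ_le_const2[OF tendsto_rabs[OF ml_partial_sums_LIMSEQ[OF assms(1-4)]]]) auto

lemma ml_series_fractional_integral:
  assumes "\<alpha> > 0" "a > 0" "p > 0" "r > 0" and c: "ml_summable \<alpha> c a"
  shows "((\<lambda>s. (r - s) powr (p - 1) * ml_series \<alpha> c a s) has_integral Gamma p * ml_series \<alpha> c (a + p) r) {0..r}"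
    and "summable (\<lambda>i. c i * r powr (\<alpha> * real i + (a + p) - 1) / Gamma (\<alpha> * real i + (a + p)))"
proof -
  define t where "t i s = c i * s powr (\<alpha> * real i + a - 1) / Gamma (\<alpha> * real i + a)" for i s
  define w where "w i = c i * r powr (\<alpha> * real i + (a + p) - 1) / Gamma (\<alpha> * real i + (a + p))" for i
  define K where "K = ml_majorant \<alpha> c a r"
  have terms: "((\<lambda>s. (r - s) powr (p - 1) * t i s) has_integral Gamma p * w i) {0..r}" for i
  proof -
    have "\<alpha> * real i + a > 0"
      using assms by (simp add: add_nonneg_pos)
    from has_integral_mult_right[OF has_integral_powr_Gamma[OF \<open>p > 0\<close> this \<open>r > 0\<close>], of "c i"]
    show ?thesis
      by (simp add: t_def w_def add_ac mult_ac)
  qed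
  have dom: "(\<lambda>s. K * ((r - s) powr (p - 1) * s powr (a - 1))) integrable_on {0..r}"
    using has_integral_mult_right[OF has_integral_powr_Beta[OF \<open>p > 0\<close> \<open>a > 0\<close> \<open>r > 0\<close>]]
    by (rule has_integral_integrable)
  have bound: "\<bar>\<Sum>i<k. (r - s) powr (p - 1) * t i s\<bar> \<le> K * ((r - s) powr (p - 1) * s powr (a - 1))"
    if "s \<in> {0..r}" for k s
  proof -
    have "\<bar>\<Sum>i<k. t i s\<bar> \<le> K * s powr (a - 1)"
      using that ml_partial_sums_bound[OF c] assms unfolding t_def K_def by auto
    then have "(r - s) powr (p - 1) * \<bar>\<Sum>i<k. t i s\<bar> \<le> (r - s) powr (p - 1) * (K * s powr (a - 1))"
      by (rule mult_left_mono) simp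
    then show ?thesis
      unfolding sum_distrib_left[symmetric] by (simp add: abs_mult mult_ac)
  qed
  have lim: "(\<lambda>k. \<Sum>i<k. (r - s) powr (p - 1) * t i s) \<longlonglongrightarrow> (r - s) powr (p - 1) * ml_series \<alpha> c a s"
    if "s \<in> {0..r}" for s
    unfolding sum_distrib_left[symmetric]
    using that ml_partial_sums_LIMSEQ[OF c] assms unfolding t_def by (intro tendsto_mult_left) auto
  note DC = integral_sums_dominated[OF terms dom bound lim]
  have "Gamma p \<noteq> 0"
    using \<open>p > 0\<close> by (rule Gamma_real_neq_0)
  then have "w sums (integral {0..r} (\<lambda>s. (r - s) powr (p - 1) * ml_series \<alpha> c a s) / Gamma p)"
    using sums_divide[OF DC(2), of "Gamma p"] by simp
  then show "summable w"
    and "((\<lambda>s. (r - s) powr (p - 1) * ml_series \<alpha> c a s) has_integral Gamma p * ml_series \<alpha> c (a + p) r) {0..r}"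
    using \<open>Gamma p \<noteq> 0\<close> integrable_integral[OF DC(1)]
    by (simp_all add: sums_iff ml_series_def w_def[abs_def])
qed

lemma ml_summable_shift:
  assumes "\<alpha> > 0" "a > 0" "p > 0" and c: "ml_summable \<alpha> c a"
  shows "ml_summable \<alpha> c (a + p)"
  unfolding ml_summable_def
proof (intro allI impI)
  fix r :: real assume "r > 0"
  have "summable (\<lambda>i. r powr (1 - (a + p)) *
      (\<bar>c i\<bar> * r powr (\<alpha> * real i + (a + p) - 1) / Gamma (\<alpha> * real i + (a + p))))"
    using ml_series_fractional_integral(2)[OF assms(1-3) \<open>r > 0\<close>, of "\<lambda>i. \<bar>c i\<bar>"] c
    by (intro summable_mult) simp
  moreover have "r powr (1 - (a + p)) * r powr (\<alpha> * real i + (a + p) - 1) = r powr (\<alpha> * real i)" for i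
    by (simp add: powr_add[symmetric])
  ultimately show "summable (\<lambda>i. \<bar>c i\<bar> * r powr (\<alpha> * real i) / Gamma (\<alpha> * real i + (a + p)))"
    by (simp add: mult.left_commute[of "r powr (1 - (a + p))"])
qed

lemma ml_series_has_integral:
  assumes "\<alpha> > 0" "a > 0" "r \<ge> 0" "ml_summable \<alpha> c a"
  shows "(ml_series \<alpha> c a has_integral ml_series \<alpha> c (a + 1) r) {0..r}"
proof (cases "r = 0")
  case False
  then have "((\<lambda>s. (r - s) powr 0 * ml_series \<alpha> c a s) has_integral ml_series \<alpha> c (a + 1) r) {0..r}"
    using ml_series_fractional_integral(1)[of \<alpha> a 1 r c] assms by simp
  \<comment> \<open>\<open>(r - s) powr 0\<close> is \<open>1\<close> except at \<open>s = r\<close>, where it is \<open>0 powr 0 = 0\<close>\<close>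
  then show ?thesis
    by (rule has_integral_spike_finite[where S = "{r}", rotated 2]) auto
qed auto

lemma ml_series_convolution_row_sums:
  assumes "\<alpha> > 0" "a > 0" "b > 0" "r > 0" and c: "ml_summable \<alpha> c a" and d: "ml_summable \<alpha> d b"
  shows "(\<lambda>s. ml_series \<alpha> c a (r - s) * ml_series \<alpha> d b s) integrable_on {0..r}"
    and "(\<lambda>i. c i * ml_series \<alpha> d (b + (\<alpha> * real i + a)) r) sums
           integral {0..r} (\<lambda>s. ml_series \<alpha> c a (r - s) * ml_series \<alpha> d b s)"
proof -
  define t where "t i x = c i * x powr (\<alpha> * real i + a - 1) / Gamma (\<alpha> * real i + a)" for i x
  define Kc where "Kc = ml_majorant \<alpha> c a r"
  define Kd where "Kd = ml_majorant \<alpha> d b r"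
  have terms: "((\<lambda>s. t i (r - s) * ml_series \<alpha> d b s) has_integral c i * ml_series \<alpha> d (b + (\<alpha> * real i + a)) r) {0..r}" for i
  proof -
    have q: "\<alpha> * real i + a > 0"
      using assms by (simp add: add_nonneg_pos)
    from has_integral_mult_right[OF ml_series_fractional_integral(1)[OF \<open>\<alpha> > 0\<close> \<open>b > 0\<close> q \<open>r > 0\<close> d],
        of "c i / Gamma (\<alpha> * real i + a)"]
    show ?thesis
      using Gamma_real_neq_0[OF q] by (simp add: t_def mult_ac)
  qed
  have dom: "(\<lambda>s. Kc * Kd * ((r - s) powr (a - 1) * s powr (b - 1))) integrable_on {0..r}"
    using has_integral_mult_right[OF has_integral_powr_Beta[OF \<open>a > 0\<close> \<open>b > 0\<close> \<open>r > 0\<close>]]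
    by (rule has_integral_integrable)
  have bound: "\<bar>\<Sum>i<k. t i (r - s) * ml_series \<alpha> d b s\<bar> \<le> Kc * Kd * ((r - s) powr (a - 1) * s powr (b - 1))"
    if "s \<in> {0..r}" for k s
  proof -
    have "\<bar>\<Sum>i<k. t i (r - s)\<bar> \<le> Kc * (r - s) powr (a - 1)"
      using that assms ml_partial_sums_bound[OF c, of "r - s" r k] by (simp add: t_def Kc_def)
    moreover have "\<bar>ml_series \<alpha> d b s\<bar> \<le> Kd * s powr (b - 1)"
      using that assms ml_series_bound[OF d, of s r] by (simp add: Kd_def)
    ultimately have "\<bar>\<Sum>i<k. t i (r - s)\<bar> * \<bar>ml_series \<alpha> d b s\<bar> \<le> Kc * (r - s) powr (a - 1) * (Kd * s powr (b - 1))"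
      using ml_majorant_nonneg[OF c] assms by (intro mult_mono) (auto simp: Kc_def)
    then show ?thesis
      unfolding sum_distrib_right[symmetric] by (simp add: abs_mult mult_ac)
  qed
  have lim: "(\<lambda>k. \<Sum>i<k. t i (r - s) * ml_series \<alpha> d b s) \<longlonglongrightarrow> ml_series \<alpha> c a (r - s) * ml_series \<alpha> d b s"
    if "s \<in> {0..r}" for s
    unfolding sum_distrib_right[symmetric] t_def
    using that assms by (intro tendsto_mult_right ml_partial_sums_LIMSEQ[OF c]) auto
  show "(\<lambda>s. ml_series \<alpha> c a (r - s) * ml_series \<alpha> d b s) integrable_on {0..r}"
    and "(\<lambda>i. c i * ml_series \<alpha> d (b + (\<alpha> * real i + a)) r) sums
           integral {0..r} (\<lambda>s. ml_series \<alpha> c a (r - s) * ml_series \<alpha> d b s)"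
    using integral_sums_dominated[OF terms dom bound lim] by auto
qed

lemma ml_convolution_sums:
  assumes "\<alpha> > 0" "a > 0" "b > 0" "r > 0" and c: "ml_summable \<alpha> c a" and d: "ml_summable \<alpha> d b"
  shows "(\<lambda>n. fps_nth (Abs_fps c * Abs_fps d) n * r powr (\<alpha> * real n + (a + b) - 1) / Gamma (\<alpha> * real n + (a + b)))
           sums integral {0..r} (\<lambda>s. ml_series \<alpha> c a (r - s) * ml_series \<alpha> d b s)"
proof -
  define W where "W n = r powr (\<alpha> * real n + (a + b) - 1) / Gamma (\<alpha> * real n + (a + b))" for n
  \<comment> \<open>\<open>W (i + j)\<close> couples the indices, so this double series is no Cauchy product of two series\<close>
  define u where "u i j = c i * (d j * W (i + j))" for i j
  have W_nonneg: "W n \<ge> 0" for n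
    unfolding W_def using Gamma_affine_pos[of \<alpha> "a + b" n] assms by simp
  have row_series: "ml_series \<alpha> e (b + (\<alpha> * real i + a)) r = (\<Sum>j. e j * W (i + j))"
    and row_summable: "ml_summable \<alpha> e b \<Longrightarrow> summable (\<lambda>j. e j * W (i + j))" for e i
  proof -
    have exponent: "\<alpha> * real j + (b + (\<alpha> * real i + a)) = \<alpha> * real (i + j) + (a + b)" for j
      by (simp add: algebra_simps)
    show "ml_series \<alpha> e (b + (\<alpha> * real i + a)) r = (\<Sum>j. e j * W (i + j))"
      unfolding ml_series_def W_def exponent by (simp add: mult_ac)
    assume "ml_summable \<alpha> e b"
    then have "ml_summable \<alpha> e (b + (\<alpha> * real i + a))"
      using assms by (intro ml_summable_shift) (auto simp: add_nonneg_pos)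
    from summable_ml_terms[OF this] show "summable (\<lambda>j. e j * W (i + j))"
      using assms unfolding W_def exponent[symmetric] by (simp add: mult_ac add_nonneg_pos add_pos_pos)
  qed
  have rows: "summable (\<lambda>j. \<bar>u i j\<bar>)" for i
    using summable_mult[OF row_summable[of "\<lambda>j. \<bar>d j\<bar>"], of "\<bar>c i\<bar>"] d
    by (simp add: u_def abs_mult W_nonneg)
  have "(\<Sum>j. \<bar>u i j\<bar>) = \<bar>c i\<bar> * ml_series \<alpha> (\<lambda>j. \<bar>d j\<bar>) (b + (\<alpha> * real i + a)) r" for i
    using suminf_mult[OF row_summable[of "\<lambda>j. \<bar>d j\<bar>"], of "\<bar>c i\<bar>"] d
    by (simp add: u_def abs_mult W_nonneg row_series)
  then have cols: "summable (\<lambda>i. \<Sum>j. \<bar>u i j\<bar>)"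
    using ml_series_convolution_row_sums(2)[of \<alpha> a b r "\<lambda>i. \<bar>c i\<bar>" "\<lambda>i. \<bar>d i\<bar>"] assms
    by (simp add: sums_iff)
  have "(\<Sum>j. u i j) = c i * ml_series \<alpha> d (b + (\<alpha> * real i + a)) r" for i
    unfolding row_series u_def by (intro suminf_mult row_summable d)
  then have "(\<Sum>i. \<Sum>j. u i j) = integral {0..r} (\<lambda>s. ml_series \<alpha> c a (r - s) * ml_series \<alpha> d b s)"
    using ml_series_convolution_row_sums(2)[OF assms] by (simp add: sums_iff)
  moreover have "(\<Sum>i\<le>n. u i (n - i)) = fps_nth (Abs_fps c * Abs_fps d) n * W n" for n
    by (simp add: u_def fps_mult_nth atLeast0AtMost sum_distrib_left mult_ac)
  ultimately show ?thesis
    using sums_antidiagonals[OF rows cols] by (simp add: W_def)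
qed

lemma ml_series_convolution:
  assumes "\<alpha> > 0" "a > 0" "b > 0" "r > 0" "ml_summable \<alpha> c a" "ml_summable \<alpha> d b"
  shows "((\<lambda>s. ml_series \<alpha> c a (r - s) * ml_series \<alpha> d b s) has_integral
           ml_series \<alpha> (fps_nth (Abs_fps c * Abs_fps d)) (a + b) r) {0..r}"
  using ml_convolution_sums[OF assms] integrable_integral[OF ml_series_convolution_row_sums(1)[OF assms]]
  by (simp add: ml_series_def sums_iff)

lemma ml_summable_convolution:
  assumes "\<alpha> > 0" "a > 0" "b > 0" "ml_summable \<alpha> c a" "ml_summable \<alpha> d b"
  shows "ml_summable \<alpha> (fps_nth (Abs_fps c * Abs_fps d)) (a + b)"
  unfolding ml_summable_def
proof (intro allI impI)
  fix r :: real assume "r > 0"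
  define cd where "cd = fps_nth (Abs_fps (\<lambda>i. \<bar>c i\<bar>) * Abs_fps (\<lambda>i. \<bar>d i\<bar>))"
  have "summable (\<lambda>n. r powr (1 - (a + b)) * (cd n * r powr (\<alpha> * real n + (a + b) - 1) / Gamma (\<alpha> * real n + (a + b))))"
    using ml_convolution_sums[of \<alpha> a b r "\<lambda>i. \<bar>c i\<bar>" "\<lambda>i. \<bar>d i\<bar>"] assms \<open>r > 0\<close>
    by (intro summable_mult) (simp add: sums_iff cd_def)
  then show "summable (\<lambda>n. \<bar>fps_nth (Abs_fps c * Abs_fps d) n\<bar> * r powr (\<alpha> * real n) / Gamma (\<alpha> * real n + (a + b)))"
  proof (rule summable_comparison_test'[where N = 0])
    fix n
    have "\<bar>fps_nth (Abs_fps c * Abs_fps d) n\<bar> \<le> cd n"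
      unfolding cd_def fps_mult_nth by (rule order.trans[OF sum_abs]) (simp add: abs_mult)
    then have "\<bar>fps_nth (Abs_fps c * Abs_fps d) n\<bar> * (r powr (\<alpha> * real n) / Gamma (\<alpha> * real n + (a + b)))
        \<le> cd n * (r powr (\<alpha> * real n) / Gamma (\<alpha> * real n + (a + b)))"
      using Gamma_affine_pos[of \<alpha> "a + b" n] assms by (intro mult_right_mono) auto
    then show "norm (\<bar>fps_nth (Abs_fps c * Abs_fps d) n\<bar> * r powr (\<alpha> * real n) / Gamma (\<alpha> * real n + (a + b)))
        \<le> r powr (1 - (a + b)) * (cd n * r powr (\<alpha> * real n + (a + b) - 1) / Gamma (\<alpha> * real n + (a + b)))"
      using Gamma_affine_pos[of \<alpha> "a + b" n] assms \<open>r > 0\<close>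
      by (simp add: powr_add[symmetric] mult_ac)
  qed
qed

lemma ml_series_convolution_nonneg:
  assumes "\<alpha> > 0" "a > 0" "b > 0" "r \<ge> 0" "ml_summable \<alpha> c a" "ml_summable \<alpha> d b"
    and "\<And>x. x \<ge> 0 \<Longrightarrow> ml_series \<alpha> c a x \<ge> 0" "\<And>x. x \<ge> 0 \<Longrightarrow> ml_series \<alpha> d b x \<ge> 0"
  shows "ml_series \<alpha> (fps_nth (Abs_fps c * Abs_fps d)) (a + b) r \<ge> 0"
proof (cases "r = 0")
  case False
  with assms show ?thesis
    by (intro has_integral_nonneg[OF ml_series_convolution[of \<alpha> a b r]]) auto
qed simp

lemma ml_power_summable_nonneg:
  assumes "\<alpha> > 0" "a > 0" "m \<ge> 1" and c: "ml_summable \<alpha> c a"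
    and c_nonneg: "\<And>x. x \<ge> 0 \<Longrightarrow> ml_series \<alpha> c a x \<ge> 0"
  shows "ml_summable \<alpha> (fps_nth (Abs_fps c ^ m)) (a * real m) \<and>
         (\<forall>x\<ge>0. ml_series \<alpha> (fps_nth (Abs_fps c ^ m)) (a * real m) x \<ge> 0)"
  using \<open>m \<ge> 1\<close>
proof (induction m rule: dec_induct)
  case base
  have "fps_nth (Abs_fps c) = c" by (rule ext) simp
  with c c_nonneg show ?case by simp
next
  case (step m)
  have "fps_nth (Abs_fps c ^ Suc m) = fps_nth (Abs_fps c * Abs_fps (fps_nth (Abs_fps c ^ m)))"
    by (simp add: fps_nth_inverse)
  moreover have "a * real (Suc m) = a + a * real m"
    by (simp add: algebra_simps)
  moreover have "a * real m > 0"
    using assms step.hyps by simp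
  ultimately show ?case
    using step.IH assms ml_summable_convolution ml_series_convolution_nonneg by simp
qed

definition ml_density :: "real \<Rightarrow> (nat \<Rightarrow> real) \<Rightarrow> real \<Rightarrow> real \<Rightarrow> ennreal" where
  "ml_density \<alpha> c a x = ennreal (if x \<ge> 0 then ml_series \<alpha> c a x else 0)"

lemma ml_density_convolution:
  assumes "\<alpha> > 0" "a > 0" "b > 0" "ml_summable \<alpha> c a" "ml_summable \<alpha> d b"
    and c_nonneg: "\<And>x. x \<ge> 0 \<Longrightarrow> ml_series \<alpha> c a x \<ge> 0"
    and d_nonneg: "\<And>x. x \<ge> 0 \<Longrightarrow> ml_series \<alpha> d b x \<ge> 0"
  shows "(\<lambda>x. \<integral>\<^sup>+y. ml_density \<alpha> c a (x - y) * ml_density \<alpha> d b y \<partial>lborel) =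
         ml_density \<alpha> (fps_nth (Abs_fps c * Abs_fps d)) (a + b)"
proof
  fix x :: real
  show "(\<integral>\<^sup>+y. ml_density \<alpha> c a (x - y) * ml_density \<alpha> d b y \<partial>lborel) =
        ml_density \<alpha> (fps_nth (Abs_fps c * Abs_fps d)) (a + b) x"
  proof (cases "x > 0")
    case True
    have "ml_density \<alpha> c a (x - y) * ml_density \<alpha> d b y =
        ennreal (ml_series \<alpha> c a (x - y) * ml_series \<alpha> d b y) * indicator {0..x} y" for y
      using c_nonneg[of "x - y"] d_nonneg[of y] by (auto simp: ml_density_def ennreal_mult indicator_def)
    then have "(\<integral>\<^sup>+y. ml_density \<alpha> c a (x - y) * ml_density \<alpha> d b y \<partial>lborel) =
        (\<integral>\<^sup>+y. ennreal (ml_series \<alpha> c a (x - y) * ml_series \<alpha> d b y) * indicator {0..x} y \<partial>lborel)"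
      by simp
    also have "\<dots> = ennreal (ml_series \<alpha> (fps_nth (Abs_fps c * Abs_fps d)) (a + b) x)"
      using True assms ml_series_convolution[of \<alpha> a b x c d]
      by (intro nn_integral_has_integral_lebesgue') auto
    finally show ?thesis
      using True by (simp add: ml_density_def)
  next
    case False
    then have "ml_density \<alpha> c a (x - y) * ml_density \<alpha> d b y = 0" for y
      by (cases "y = 0") (auto simp: ml_density_def)
    then have "(\<integral>\<^sup>+y. ml_density \<alpha> c a (x - y) * ml_density \<alpha> d b y \<partial>lborel) = (\<integral>\<^sup>+(y::real). 0 \<partial>lborel)"
      by (simp only:)
    moreover have "ml_density \<alpha> (fps_nth (Abs_fps c * Abs_fps d)) (a + b) x = 0"
      using False by (cases "x = 0") (auto simp: ml_density_def)
    ultimately show ?thesis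
      by simp
  qed
qed

lemma (in prob_space) distributed_sum_ml_density:
  fixes X :: "'i \<Rightarrow> 'a \<Rightarrow> real"
  assumes "\<alpha> > 0" "a > 0" and c: "ml_summable \<alpha> c a"
    and c_nonneg: "\<And>x. x \<ge> 0 \<Longrightarrow> ml_series \<alpha> c a x \<ge> 0"
    and "finite I" "I \<noteq> {}" "indep_vars (\<lambda>_. borel) X I"
    and "\<And>i. i \<in> I \<Longrightarrow> distributed M lborel (X i) (ml_density \<alpha> c a)"
  shows "distributed M lborel (\<lambda>\<omega>. \<Sum>i\<in>I. X i \<omega>) (ml_density \<alpha> (fps_nth (Abs_fps c ^ card I)) (a * real (card I)))"
  using assms(5-8)
proof (induction I rule: finite_ne_induct)
  case (singleton i)
  have "fps_nth (Abs_fps c) = c" by (rule ext) simp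
  with singleton show ?case by simp
next
  case (insert i I)
  define m where "m = card I"
  have "m \<ge> 1"
    using insert.hyps(1,2) by (simp add: m_def Suc_leI card_gt_0_iff)
  note cm = ml_power_summable_nonneg[OF \<open>\<alpha> > 0\<close> \<open>a > 0\<close> this c c_nonneg]
  have "distributed M lborel (\<lambda>\<omega>. X i \<omega> + (\<Sum>i\<in>I. X i \<omega>))
      (\<lambda>x. \<integral>\<^sup>+y. ml_density \<alpha> c a (x - y) * ml_density \<alpha> (fps_nth (Abs_fps c ^ m)) (a * real m) y \<partial>lborel)"
    using insert indep_vars_subset[OF insert.prems(1)] unfolding m_def
    by (intro distributed_convolution indep_vars_sum) auto
  also have "(\<lambda>x. \<integral>\<^sup>+y. ml_density \<alpha> c a (x - y) * ml_density \<alpha> (fps_nth (Abs_fps c ^ m)) (a * real m) y \<partial>lborel) =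
      ml_density \<alpha> (fps_nth (Abs_fps c ^ Suc m)) (a * real (Suc m))"
    using ml_density_convolution[of \<alpha> a "a * real m" c "fps_nth (Abs_fps c ^ m)"] assms cm \<open>m \<ge> 1\<close>
    by (simp add: fps_nth_inverse algebra_simps)
  finally show ?case
    using insert.hyps(1,3) by (simp add: m_def)
qed

lemma (in prob_space) ml_density_cdf:
  assumes X: "distributed M lborel X (ml_density \<alpha> c a)"
    and "\<alpha> > 0" "a > 0" "ml_summable \<alpha> c a" "r \<ge> 0"
    and c_nonneg: "\<And>x. x \<ge> 0 \<Longrightarrow> ml_series \<alpha> c a x \<ge> 0"
  shows "measure M {x \<in> space M. X x \<le> r} = ml_series \<alpha> c (a + 1) r"
proof -
  have I: "(ml_series \<alpha> c a has_integral ml_series \<alpha> c (a + 1) r) {0..r}"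
    using ml_series_has_integral assms by blast
  have "measure M {x \<in> space M. X x \<le> r} = measure (distr M lborel X) {..r}"
    using distributed_measurable[OF X] by (subst measure_distr) (auto simp: vimage_def Int_def conj_commute)
  also have "\<dots> = enn2real (\<integral>\<^sup>+x. ml_density \<alpha> c a x * indicator {..r} x \<partial>lborel)"
    unfolding distributed_distr_eq_density[OF X] measure_def
    using distributed_borel_measurable[OF X] by (simp add: emeasure_density)
  also have "(\<lambda>x. ml_density \<alpha> c a x * indicator {..r} x) = (\<lambda>x. ennreal (ml_series \<alpha> c a x) * indicator {0..r} x)"
    by (auto simp: ml_density_def indicator_def)
  also have "(\<integral>\<^sup>+x. ennreal (ml_series \<alpha> c a x) * indicator {0..r} x \<partial>lborel) = ennreal (ml_series \<alpha> c (a + 1) r)"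
    using c_nonneg I by (intro nn_integral_has_integral_lebesgue') auto
  finally show ?thesis
    using has_integral_nonneg[OF I] c_nonneg by simp
qed

declare delta.simps [simp del]

definition pdf_coeff :: "real \<Rightarrow> real \<Rightarrow> real \<Rightarrow> (nat \<Rightarrow> real) \<Rightarrow> nat \<Rightarrow> real" where
  "pdf_coeff \<alpha> T rh \<phi> i = \<alpha> / rh powr (\<alpha> * T) * lam \<alpha> T rh \<phi> i"

lemma pdf_coeff_Cauchy_product:
  fixes \<alpha> T rh r :: real and \<phi> :: "nat \<Rightarrow> real"
  assumes "\<alpha> > 0" "T > 0" "rh > 0" "r > 0"
  defines "x \<equiv> r powr \<alpha> / rh powr \<alpha>"
    and "b \<equiv> \<lambda>j. \<phi> j * r powr (\<alpha> * (real j + T) - 1) / (rh powr (\<alpha> * (real j + T)) * Gamma (real j + T))"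
  shows "\<alpha> * (\<Sum>k\<le>n. (- x) ^ k / fact k * b (n - k)) =
         pdf_coeff \<alpha> T rh \<phi> n * r powr (\<alpha> * real n + \<alpha> * T - 1) / Gamma (\<alpha> * real n + \<alpha> * T)"
proof -
  define C where "C = r powr (\<alpha> * real n + \<alpha> * T - 1) / (rh powr (\<alpha> * T) * rh powr (\<alpha> * real n))"
  have "(- x) ^ k / fact k * b (n - k) = (-1) ^ k * \<phi> (n - k) / (fact k * Gamma (real (n - k) + T)) * C"
    if "k \<le> n" for k
  proof -
    have e1: "x ^ k = r powr (\<alpha> * real k) / rh powr (\<alpha> * real k)"
      using assms by (simp add: x_def power_divide powr_power mult_ac)
    have e2: "r powr (\<alpha> * real k) * r powr (\<alpha> * (real (n - k) + T) - 1) = r powr (\<alpha> * real n + \<alpha> * T - 1)"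
      and e3: "rh powr (\<alpha> * real k) * rh powr (\<alpha> * (real (n - k) + T)) = rh powr (\<alpha> * T) * rh powr (\<alpha> * real n)"
      unfolding powr_add[symmetric] using that by (simp_all add: of_nat_diff algebra_simps)
    have "Gamma (real (n - k) + T) > 0"
      using assms by (intro Gamma_real_pos) simp
    then have "(- x) ^ k / fact k * b (n - k) = (-1) ^ k * \<phi> (n - k) / (fact k * Gamma (real (n - k) + T)) *
        ((r powr (\<alpha> * real k) * r powr (\<alpha> * (real (n - k) + T) - 1)) /
         (rh powr (\<alpha> * real k) * rh powr (\<alpha> * (real (n - k) + T))))"
      unfolding power_minus[of x] e1 b_def using assms by (simp add: field_simps)
    then show ?thesis
      unfolding e2 e3 C_def .
  qed
  then have "(\<Sum>k\<le>n. (- x) ^ k / fact k * b (n - k)) =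
      (\<Sum>k\<le>n. (-1) ^ k * \<phi> (n - k) / (fact k * Gamma (real (n - k) + T))) * C"
    by (simp add: sum_distrib_right)
  also have "(\<Sum>k\<le>n. (-1) ^ k * \<phi> (n - k) / (fact k * Gamma (real (n - k) + T))) =
             (\<Sum>j\<le>n. (-1) ^ (n - j) * \<phi> j / (fact (n - j) * Gamma (real j + T)))"
    unfolding atLeast0AtMost[symmetric]
    by (subst sum.atLeastAtMost_rev) (intro sum.cong refl, auto)
  finally show ?thesis
    using assms Gamma_affine_pos[of \<alpha> "\<alpha> * T" n]
    unfolding pdf_coeff_def lam_def C_def
    by (simp add: field_simps distrib_left)
qed

lemma pdf_f_eq_ml_series:
  assumes "\<alpha> > 0" "T > 0" "rh > 0" "r \<ge> 0"
    and "summable (\<lambda>i. \<bar>\<phi> i * r powr (\<alpha> * (real i + T) - 1) / (rh powr (\<alpha> * (real i + T)) * Gamma (real i + T))\<bar>)"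
  shows "pdf_f \<alpha> T rh \<phi> r = ml_series \<alpha> (pdf_coeff \<alpha> T rh \<phi>) (\<alpha> * T) r"
proof (cases "r = 0")
  case True
  then show ?thesis by (simp add: pdf_f_def)
next
  case False
  define x where "x = r powr \<alpha> / rh powr \<alpha>"
  define b where "b i = \<phi> i * r powr (\<alpha> * (real i + T) - 1) / (rh powr (\<alpha> * (real i + T)) * Gamma (real i + T))" for i
  have exp_series: "(\<lambda>k. (- x) ^ k / fact k) sums exp (- x)"
    using exp_converges[of "- x"] by (simp add: divide_inverse mult.commute)
  have "summable (\<lambda>k. norm ((- x) ^ k / fact k))"
    using summable_norm_exp[of "- x"] by (simp add: divide_inverse mult.commute)
  moreover have "summable (\<lambda>k. norm (b k))"
    using assms(5) unfolding b_def real_norm_def .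
  ultimately have "(\<lambda>n. \<Sum>k\<le>n. (- x) ^ k / fact k * b (n - k)) sums (exp (- x) * suminf b)"
    using Cauchy_product_sums[of "\<lambda>k. (- x) ^ k / fact k" b] sums_unique[OF exp_series] by simp
  from sums_mult[OF this, of \<alpha>]
  have "(\<lambda>n. pdf_coeff \<alpha> T rh \<phi> n * r powr (\<alpha> * real n + \<alpha> * T - 1) / Gamma (\<alpha> * real n + \<alpha> * T))
          sums (\<alpha> * (exp (- x) * suminf b))"
    using pdf_coeff_Cauchy_product[of \<alpha> T rh r] assms False unfolding x_def b_def by simp
  then show ?thesis
    by (simp add: sums_iff ml_series_def pdf_f_def x_def b_def[abs_def] mult.assoc)
qed

lemma ml_summable_pdf_coeff:
  assumes "\<alpha> > 0" "T > 0" "rh > 0"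
    and "\<And>r. r > 0 \<Longrightarrow> summable (\<lambda>i. \<bar>\<phi> i * r powr (\<alpha> * (real i + T) - 1) / (rh powr (\<alpha> * (real i + T)) * Gamma (real i + T))\<bar>)"
  shows "ml_summable \<alpha> (pdf_coeff \<alpha> T rh \<phi>) (\<alpha> * T)"
  unfolding ml_summable_def
proof (intro allI impI)
  fix r :: real assume "r > 0"
  define x where "x = r powr \<alpha> / rh powr \<alpha>"
  define b where "b i = \<phi> i * r powr (\<alpha> * (real i + T) - 1) / (rh powr (\<alpha> * (real i + T)) * Gamma (real i + T))" for i
  have "summable (\<lambda>k. norm (norm ((- x) ^ k / fact k)))"
    using summable_norm_exp[of "- x"] by (simp add: divide_inverse mult.commute)
  from summable_Cauchy_product[OF this, of "\<lambda>k. norm (b k)"] assms(4)[OF \<open>r > 0\<close>]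
  have "summable (\<lambda>n. r powr (1 - \<alpha> * T) * (\<alpha> * (\<Sum>k\<le>n. \<bar>(- x) ^ k / fact k\<bar> * \<bar>b (n - k)\<bar>)))"
    by (intro summable_mult) (simp add: b_def)
  then show "summable (\<lambda>n. \<bar>pdf_coeff \<alpha> T rh \<phi> n\<bar> * r powr (\<alpha> * real n) / Gamma (\<alpha> * real n + \<alpha> * T))"
  proof (rule summable_comparison_test'[where N = 0])
    fix n
    have G: "Gamma (\<alpha> * real n + \<alpha> * T) > 0"
      using Gamma_affine_pos[of \<alpha> "\<alpha> * T" n] assms by simp
    have "\<bar>pdf_coeff \<alpha> T rh \<phi> n\<bar> * r powr (\<alpha> * real n) / Gamma (\<alpha> * real n + \<alpha> * T) =
        r powr (1 - \<alpha> * T) * \<bar>pdf_coeff \<alpha> T rh \<phi> n * r powr (\<alpha> * real n + \<alpha> * T - 1) / Gamma (\<alpha> * real n + \<alpha> * T)\<bar>"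
      using G \<open>r > 0\<close> by (simp add: abs_mult powr_add[symmetric] mult_ac)
    also have "\<dots> = r powr (1 - \<alpha> * T) * \<bar>\<alpha> * (\<Sum>k\<le>n. (- x) ^ k / fact k * b (n - k))\<bar>"
      unfolding x_def b_def pdf_coeff_Cauchy_product[OF assms(1-3) \<open>r > 0\<close>] ..
    also have "\<dots> \<le> r powr (1 - \<alpha> * T) * (\<alpha> * (\<Sum>k\<le>n. \<bar>(- x) ^ k / fact k\<bar> * \<bar>b (n - k)\<bar>))"
      using sum_abs[of "\<lambda>k. (- x) ^ k / fact k * b (n - k)" "{..n}"] \<open>\<alpha> > 0\<close>
      by (intro mult_left_mono) (auto simp: abs_mult)
    finally show "norm (\<bar>pdf_coeff \<alpha> T rh \<phi> n\<bar> * r powr (\<alpha> * real n) / Gamma (\<alpha> * real n + \<alpha> * T))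
        \<le> r powr (1 - \<alpha> * T) * (\<alpha> * (\<Sum>k\<le>n. \<bar>(- x) ^ k / fact k\<bar> * \<bar>b (n - k)\<bar>))"
      using G by simp
  qed
qed

lemma lam_0_nonzero:
  assumes "\<alpha> > 0" "T > 0" "rh > 0" "\<phi> 0 \<noteq> 0"
  shows "lam \<alpha> T rh \<phi> 0 \<noteq> 0"
  using assms by (simp add: lam_def Gamma_real_neq_0)

lemma delta_eq_fps_power_nth:
  assumes "lam \<alpha> T rh \<phi> 0 \<noteq> 0"
  shows "delta \<alpha> T rh \<phi> L i = fps_nth (Abs_fps (lam \<alpha> T rh \<phi>) ^ L) i"
proof (induction i rule: less_induct)
  case (less i)
  show ?case
  proof (cases "i = 0")
    case True
    then show ?thesis by (simp add: delta.simps fps_power_zeroth)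
  next
    case False
    have "delta \<alpha> T rh \<phi> L i = 1 / (real i * lam \<alpha> T rh \<phi> 0) *
        (\<Sum>h\<in>{1..i}. fps_nth (Abs_fps (lam \<alpha> T rh \<phi>) ^ L) (i - h) * lam \<alpha> T rh \<phi> h * (real (h * L + h) - real i))"
      using False less.IH by (subst delta.simps) simp
    also have "\<dots> = fps_nth (Abs_fps (lam \<alpha> T rh \<phi>) ^ L) i"
      using fps_power_nth_recurrence[of "Abs_fps (lam \<alpha> T rh \<phi>)" i L, symmetric] False assms by simp
    finally show ?thesis .
  qed
qed

lemma fps_power_pdf_coeff_nth:
  assumes "\<alpha> > 0" "T > 0" "rh > 0" "\<phi> 0 \<noteq> 0"
  shows "fps_nth (Abs_fps (pdf_coeff \<alpha> T rh \<phi>) ^ L) i = \<alpha> ^ L / rh powr (\<alpha> * T * real L) * delta \<alpha> T rh \<phi> L i"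
proof -
  have "Abs_fps (pdf_coeff \<alpha> T rh \<phi>) = fps_const (\<alpha> / rh powr (\<alpha> * T)) * Abs_fps (lam \<alpha> T rh \<phi>)"
    by (simp add: fps_eq_iff pdf_coeff_def)
  moreover have "(\<alpha> / rh powr (\<alpha> * T)) ^ L = \<alpha> ^ L / rh powr (\<alpha> * T * real L)"
    using assms by (simp add: power_divide powr_power mult_ac)
  ultimately show ?thesis
    using delta_eq_fps_power_nth[OF lam_0_nonzero[of \<alpha> T rh \<phi>, OF assms]] by (simp add: power_mult_distrib)
qed

lemma ml_series_pdf_coeff_power:
  assumes "\<alpha> > 0" "T > 0" "rh > 0" "\<phi> 0 \<noteq> 0" "b > 0" "r \<ge> 0"
    and "ml_summable \<alpha> (fps_nth (Abs_fps (pdf_coeff \<alpha> T rh \<phi>) ^ L)) b"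
  shows "ml_series \<alpha> (fps_nth (Abs_fps (pdf_coeff \<alpha> T rh \<phi>) ^ L)) b r =
         \<alpha> ^ L / rh powr (\<alpha> * T * real L) * ml_series \<alpha> (delta \<alpha> T rh \<phi> L) b r"
proof -
  have coeffs: "fps_nth (Abs_fps (pdf_coeff \<alpha> T rh \<phi>) ^ L) = (\<lambda>i. \<alpha> ^ L / rh powr (\<alpha> * T * real L) * delta \<alpha> T rh \<phi> L i)"
    using fps_power_pdf_coeff_nth[of \<alpha> T rh \<phi>, OF assms(1-4)] by (rule ext)
  have C: "\<alpha> ^ L / rh powr (\<alpha> * T * real L) \<noteq> 0"
    using assms by simp
  have "ml_summable \<alpha> (delta \<alpha> T rh \<phi> L) b"
    using assms(7) unfolding coeffs ml_summable_cmult_iff[OF C] .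
  then show ?thesis
    unfolding coeffs using assms by (intro ml_series_cmult) auto
qed

lemma pdf_sum_ml_density:
  assumes "\<alpha> > 0" "T > 0" "rh > 0" "\<phi> 0 \<noteq> 0" "L \<ge> 1"
    and "ml_summable \<alpha> (fps_nth (Abs_fps (pdf_coeff \<alpha> T rh \<phi>) ^ L)) (\<alpha> * T * real L)"
  shows "(\<lambda>r. ennreal (if r \<ge> 0 then pdf_sum \<alpha> T rh \<phi> L r else 0)) =
         ml_density \<alpha> (fps_nth (Abs_fps (pdf_coeff \<alpha> T rh \<phi>) ^ L)) (\<alpha> * T * real L)"
proof -
  have "\<alpha> * T * real L > 0"
    using assms by simp
  have "pdf_sum \<alpha> T rh \<phi> L r = \<alpha> ^ L / rh powr (\<alpha> * T * real L) * ml_series \<alpha> (delta \<alpha> T rh \<phi> L) (\<alpha> * T * real L) r" for r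
    unfolding pdf_sum_def ml_series_def by (simp add: algebra_simps)
  then show ?thesis
    using ml_series_pdf_coeff_power[of \<alpha> T rh \<phi>, OF assms(1-4) \<open>\<alpha> * T * real L > 0\<close> _ assms(6)]
    by (auto simp: ml_density_def fun_eq_iff)
qed

lemma cdf_sum_eq_ml_series:
  assumes "\<alpha> > 0" "T > 0" "rh > 0" "\<phi> 0 \<noteq> 0" "L \<ge> 1" "r \<ge> 0"
    and "ml_summable \<alpha> (fps_nth (Abs_fps (pdf_coeff \<alpha> T rh \<phi>) ^ L)) (\<alpha> * T * real L)"
  shows "cdf_sum \<alpha> T rh \<phi> L r = ml_series \<alpha> (fps_nth (Abs_fps (pdf_coeff \<alpha> T rh \<phi>) ^ L)) (\<alpha> * T * real L + 1) r"
proof -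
  have "cdf_sum \<alpha> T rh \<phi> L r = \<alpha> ^ L / rh powr (\<alpha> * T * real L) * ml_series \<alpha> (delta \<alpha> T rh \<phi> L) (\<alpha> * T * real L + 1) r"
    unfolding cdf_sum_def ml_series_def by (simp add: algebra_simps)
  moreover have "\<alpha> * T * real L + 1 > 0"
    using assms by (simp add: add_nonneg_pos)
  moreover have "ml_summable \<alpha> (fps_nth (Abs_fps (pdf_coeff \<alpha> T rh \<phi>) ^ L)) (\<alpha> * T * real L + 1)"
    using assms by (intro ml_summable_shift) auto
  ultimately show ?thesis
    using ml_series_pdf_coeff_power[of \<alpha> T rh \<phi>, OF assms(1-4) _ \<open>r \<ge> 0\<close>] by simp
qed

theorem corollary2:
  fixes M :: "'a measure" and R :: "nat \<Rightarrow> 'a \<Rightarrow> real"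
    and L :: nat and \<alpha> T rh :: real and \<phi> :: "nat \<Rightarrow> real"
  assumes "prob_space M"
    and "L \<ge> 1"
    and "\<alpha> > 0" and "T > 0" and "rh > 0"
    and "\<phi> 0 \<noteq> 0"
    and "\<forall>r\<ge>0. summable (\<lambda>i. \<bar>\<phi> i * r powr (\<alpha> * (real i + T) - 1)
                 / (rh powr (\<alpha> * (real i + T)) * Gamma (real i + T))\<bar>)"
    and "\<forall>r\<ge>0. pdf_f \<alpha> T rh \<phi> r \<ge> 0"
    and "prob_space.indep_vars M (\<lambda>_. borel) R {1..L}"
    and "\<forall>l\<in>{1..L}. distributed M lborel (R l)
           (\<lambda>r. ennreal (if r \<ge> 0 then pdf_f \<alpha> T rh \<phi> r else 0))"
  shows "distributed M lborel (\<lambda>x. \<Sum>l\<in>{1..L}. R l x)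
           (\<lambda>r. ennreal (if r \<ge> 0 then pdf_sum \<alpha> T rh \<phi> L r else 0))
       \<and> (\<forall>r\<ge>0. measure M {x \<in> space M. (\<Sum>l\<in>{1..L}. R l x) \<le> r} = cdf_sum \<alpha> T rh \<phi> L r)"
proof -
  interpret prob_space M by fact
  let ?c = "pdf_coeff \<alpha> T rh \<phi>" and ?cL = "fps_nth (Abs_fps (pdf_coeff \<alpha> T rh \<phi>) ^ L)"
  have a: "\<alpha> * T > 0" using assms by simp
  have c: "ml_summable \<alpha> ?c (\<alpha> * T)"
    using assms by (intro ml_summable_pdf_coeff) auto
  have pdf_f: "pdf_f \<alpha> T rh \<phi> r = ml_series \<alpha> ?c (\<alpha> * T) r" if "r \<ge> 0" for r
    using assms that by (intro pdf_f_eq_ml_series) auto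
  then have c_nonneg: "ml_series \<alpha> ?c (\<alpha> * T) r \<ge> 0" if "r \<ge> 0" for r
    using assms that by force
  have "(\<lambda>r. ennreal (if r \<ge> 0 then pdf_f \<alpha> T rh \<phi> r else 0)) = ml_density \<alpha> ?c (\<alpha> * T)"
    by (auto simp: ml_density_def pdf_f fun_eq_iff)
  then have sum: "distributed M lborel (\<lambda>x. \<Sum>l\<in>{1..L}. R l x) (ml_density \<alpha> ?cL (\<alpha> * T * real L))"
    using distributed_sum_ml_density[OF \<open>\<alpha> > 0\<close> a c c_nonneg, of "{1..L}" R] assms by auto
  have "ml_summable \<alpha> ?cL (\<alpha> * T * real L) \<and> (\<forall>x\<ge>0. ml_series \<alpha> ?cL (\<alpha> * T * real L) x \<ge> 0)"
    using ml_power_summable_nonneg[OF \<open>\<alpha> > 0\<close> a \<open>L \<ge> 1\<close> c c_nonneg] .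
  with sum show ?thesis
    using assms pdf_sum_ml_density[of \<alpha> T rh \<phi> L] cdf_sum_eq_ml_series[of \<alpha> T rh \<phi> L]
      ml_density_cdf[OF sum] by (auto simp: add_nonneg_pos)
qed

end
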